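(* Let $\mathfrak{M}=(S,\mathcal{L})$ be a partial linear space and let $\mathcal{H}$ be a flappy hyperplane of $\mathfrak{M}$. Then $\mathcal{H}$ is spiky.
   Context: A partial linear space is a pair $(S,\mathcal{L})$ where $\mathcal{L}$ is a family of subsets of $S$ (lines) such that every line has at least two points, every point lies on some line, and two distinct lines share at most one point. Points $a,b$ are collinear ($a\sim b$) if some line contains both; $[a]_\sim$ denotes the set of points collinear with $a$. A subspace is a set $X\subseteq S$ such that every line meeting $X$ in at least two points is contained in $X$. A hyperplane is a proper subspace meeting every line. A set $X\subseteq S$ is spiky if every point $a\in X$ is collinear with some point $b\notin X$; it is flappy if for every line $L\subseteq X$ there is a point $a\notin X$ with $L\subseteq[a]_\sim$. *)

theory Defs
  imports Main
begin

definition partial_linear_space :: "'a set \<Rightarrow> 'a set set \<Rightarrow> bool" where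
  "partial_linear_space S \<L> \<longleftrightarrow>
     (\<forall>L\<in>\<L>. L \<subseteq> S) \<and>
     (\<forall>L\<in>\<L>. \<exists>a b. a \<in> L \<and> b \<in> L \<and> a \<noteq> b) \<and>
     (\<forall>a\<in>S. \<exists>L\<in>\<L>. a \<in> L) \<and>
     (\<forall>L\<in>\<L>. \<forall>M\<in>\<L>. L \<noteq> M \<longrightarrow> (\<forall>a b. a \<in> L \<inter> M \<and> b \<in> L \<inter> M \<longrightarrow> a = b))"

definition collinear :: "'a set set \<Rightarrow> 'a \<Rightarrow> 'a \<Rightarrow> bool" where
  "collinear \<L> a b \<longleftrightarrow> (\<exists>L\<in>\<L>. a \<in> L \<and> b \<in> L)"

definition coll_set :: "'a set \<Rightarrow> 'a set set \<Rightarrow> 'a \<Rightarrow> 'a set" where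
  "coll_set S \<L> a = {b \<in> S. collinear \<L> a b}"

definition subspace :: "'a set \<Rightarrow> 'a set set \<Rightarrow> 'a set \<Rightarrow> bool" where
  "subspace S \<L> X \<longleftrightarrow> X \<subseteq> S \<and>
     (\<forall>L\<in>\<L>. (\<exists>a b. a \<in> L \<inter> X \<and> b \<in> L \<inter> X \<and> a \<noteq> b) \<longrightarrow> L \<subseteq> X)"

definition hyperplane :: "'a set \<Rightarrow> 'a set set \<Rightarrow> 'a set \<Rightarrow> bool" where
  "hyperplane S \<L> X \<longleftrightarrow> subspace S \<L> X \<and> X \<noteq> S \<and> (\<forall>L\<in>\<L>. L \<inter> X \<noteq> {})"

definition spiky :: "'a set \<Rightarrow> 'a set set \<Rightarrow> 'a set \<Rightarrow> bool" where
  "spiky S \<L> X \<longleftrightarrow> (\<forall>a\<in>X. \<exists>b\<in>S - X. collinear \<L> a b)"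

definition flappy :: "'a set \<Rightarrow> 'a set set \<Rightarrow> 'a set \<Rightarrow> bool" where
  "flappy S \<L> X \<longleftrightarrow> (\<forall>L\<in>\<L>. L \<subseteq> X \<longrightarrow> (\<exists>a\<in>S - X. L \<subseteq> coll_set S \<L> a))"

end

theory Submission
  imports Defs
begin

text \<open>Take a line through a point a of the flappy set X. If the line leaves X, its outside
  point is collinear with a; if it lies in X, flappiness supplies a point outside X collinear
  with the whole line.\<close>

lemma collinear_sym: "collinear \<L> a b \<Longrightarrow> collinear \<L> b a"
  by (auto simp: collinear_def)

lemma partial_linear_space_line_through:
  assumes "partial_linear_space S \<L>" and "a \<in> S"
  obtains L where "L \<in> \<L>" "a \<in> L" "L \<subseteq> S"
proof -
  have "\<forall>L\<in>\<L>. L \<subseteq> S" "\<forall>a\<in>S. \<exists>L\<in>\<L>. a \<in> L"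
    using assms(1) by (simp_all add: partial_linear_space_def)
  with assms(2) that show thesis by blast
qed

lemma flappy_imp_spiky:
  assumes "partial_linear_space S \<L>" and "X \<subseteq> S" and "flappy S \<L> X"
  shows "spiky S \<L> X"
  unfolding spiky_def
proof
  fix a assume "a \<in> X"
  with assms(2) have "a \<in> S" by blast
  with assms(1) obtain L where L: "L \<in> \<L>" "a \<in> L" "L \<subseteq> S"
    by (rule partial_linear_space_line_through)
  show "\<exists>b\<in>S - X. collinear \<L> a b"
  proof (cases "L \<subseteq> X")
    case True
    with assms(3) L(1) obtain c where "c \<in> S - X" "L \<subseteq> coll_set S \<L> c"
      by (auto simp: flappy_def)
    with L(2) show ?thesis
      by (auto simp: coll_set_def intro: collinear_sym)
  next
    case False
    then obtain b where "b \<in> L" "b \<notin> X" by blast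
    with L show ?thesis
      by (auto simp: collinear_def)
  qed
qed

theorem lemma1p1:
  assumes "partial_linear_space S \<L>"
    and "hyperplane S \<L> H"
    and "flappy S \<L> H"
  shows "spiky S \<L> H"
proof -
  have "H \<subseteq> S" using assms(2) by (simp add: hyperplane_def subspace_def)
  then show ?thesis using assms(1,3) by (intro flappy_imp_spiky)
qed

end
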